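(* Fix the number $n$ of agents, and for each $m$ let $\mathcal{K}^*_m$ be the set of vectors $k=(k_1,\ldots,k_n)$ of non-negative integers with $\sum_i k_i=m$ that maximize $SW^e_{\mathtt{FI}}(k)$ when there are $m$ items. (i) With the lexicographic scoring vector $s_j=2^{m-j}$: for every $\epsilon>0$ there exists $M$ (depending on $n$) such that for all $m\ge M$ and every $k\in\mathcal{K}^*_m$, $$\frac{\max_{a}EU^k_{\mathtt{FI}}(a)-\min_{a}EU^k_{\mathtt{FI}}(a)}{\sum_{a}EU^k_{\mathtt{FI}}(a)}<\epsilon.$$ (ii) With the Borda scoring vector $s_j=m-j+1$: for every $\epsilon>0$ there exists $M$ (depending on $n$) such that for all $m\ge M$ there exists $k\in\mathcal{K}^*_m$ satisfying the same inequality.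
   Context: There are $n$ agents $a_1,\ldots,a_n$ and $m$ items. A preference profile assigns to each agent a strict ranking of the items. With scoring vector $s=(s_1,\ldots,s_m)$ ($s_1\ge\cdots\ge s_m\ge 0$), an agent's value for her $j$-th preferred item is $s_j$, and utilities are additive. Given $k=(k_1,\ldots,k_n)$ with non-negative integer entries summing to $m$, agent $a_1$ first picks $k_1$ items, then $a_2$ picks $k_2$ of the remaining items, etc., each agent greedily picking her most preferred remaining items. $EU^k_{\mathtt{FI}}(a)$ is the expected total score received by $a$ when profiles are drawn from the full independence model $\mathtt{FI}$ (each agent's ranking uniformly random, independently across agents). $SW^e_{\mathtt{FI}}(k)=\min_a EU^k_{\mathtt{FI}}(a)$. *)

theory Defs
  imports Complex_Main "HOL-Library.FuncSet"
begin

text \<open>Agents are 0,...,n-1 (agent i is a_{i+1}); items are 0,...,m-1.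
A ranking of the m items is a list listing every item exactly once,
most preferred first.  A profile assigns a ranking to each agent.\<close>

definition rankings :: "nat \<Rightarrow> nat list set" where
  "rankings m = {xs. distinct xs \<and> set xs = {..<m}}"

definition profiles :: "nat \<Rightarrow> nat \<Rightarrow> (nat \<Rightarrow> nat list) set" where
  "profiles n m = PiE {..<n} (\<lambda>_. rankings m)"

definition picks :: "nat list \<Rightarrow> nat set \<Rightarrow> nat \<Rightarrow> nat list" where
  "picks r R c = take c (filter (\<lambda>x. x \<in> R) r)"

fun remaining :: "nat \<Rightarrow> (nat \<Rightarrow> nat list) \<Rightarrow> (nat \<Rightarrow> nat) \<Rightarrow> nat \<Rightarrow> nat set" where
  "remaining m P k 0 = {..<m}"
| "remaining m P k (Suc i) = remaining m P k i - set (picks (P i) (remaining m P k i) (k i))"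

definition agent_bundle :: "nat \<Rightarrow> (nat \<Rightarrow> nat list) \<Rightarrow> (nat \<Rightarrow> nat) \<Rightarrow> nat \<Rightarrow> nat set" where
  "agent_bundle m P k i = set (picks (P i) (remaining m P k i) (k i))"

text \<open>Utility of agent a: s is the scoring vector indexed 1..m; the agent gets s_(j+1)
for the item at (0-based) position j of her ranking.\<close>
definition utility :: "nat \<Rightarrow> (nat \<Rightarrow> real) \<Rightarrow> (nat \<Rightarrow> nat list) \<Rightarrow> (nat \<Rightarrow> nat) \<Rightarrow> nat \<Rightarrow> real" where
  "utility m s P k a = (\<Sum>j<m. if P a ! j \<in> agent_bundle m P k a then s (Suc j) else 0)"

text \<open>Expected utility under the full independence model (uniform over profiles).\<close>
definition EU :: "nat \<Rightarrow> nat \<Rightarrow> (nat \<Rightarrow> real) \<Rightarrow> (nat \<Rightarrow> nat) \<Rightarrow> nat \<Rightarrow> real" where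
  "EU n m s k a = (\<Sum>P\<in>profiles n m. utility m s P k a) / real (card (profiles n m))"

definition kvecs :: "nat \<Rightarrow> nat \<Rightarrow> (nat \<Rightarrow> nat) set" where
  "kvecs n m = {k. (\<forall>i\<ge>n. k i = 0) \<and> (\<Sum>i<n. k i) = m}"

definition SW_e :: "nat \<Rightarrow> nat \<Rightarrow> (nat \<Rightarrow> real) \<Rightarrow> (nat \<Rightarrow> nat) \<Rightarrow> real" where
  "SW_e n m s k = Min ((\<lambda>a. EU n m s k a) ` {..<n})"

definition Kstar :: "nat \<Rightarrow> nat \<Rightarrow> (nat \<Rightarrow> real) \<Rightarrow> (nat \<Rightarrow> nat) set" where
  "Kstar n m s = {k \<in> kvecs n m. \<forall>k'\<in>kvecs n m. SW_e n m s k' \<le> SW_e n m s k}"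

definition EU_ratio :: "nat \<Rightarrow> nat \<Rightarrow> (nat \<Rightarrow> real) \<Rightarrow> (nat \<Rightarrow> nat) \<Rightarrow> real" where
  "EU_ratio n m s k =
     (Max ((\<lambda>a. EU n m s k a) ` {..<n}) - Min ((\<lambda>a. EU n m s k a) ` {..<n}))
     / (\<Sum>a<n. EU n m s k a)"

definition lex_score :: "nat \<Rightarrow> nat \<Rightarrow> real" where
  "lex_score m j = 2 ^ (m - j)"

definition borda_score :: "nat \<Rightarrow> nat \<Rightarrow> real" where
  "borda_score m j = real (m - j + 1)"

end

theory Submission
  imports Defs "HOL-Combinatorics.Transposition"
begin

text \<open>Let g_a(c, M) be the expected score agent a obtains by picking her c favourite items among M
remaining ones. Relabelling items shows that EU^k(a) = g_a(k_a, m - k_1 - ... - k_{a-1}). Each g_a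
changes by at most 2 s_1 when c, or both c and M, grow by one; hence a max-min recursion over the
agents yields an optimal picking sequence under which all expected utilities lie within 4 n s_1 of
the optimal value. For Borda scores s_1 = m, whereas splitting the items equally already gives
every agent about (m / n)^2 / 2, so the relative spread is O(n^3 / m). For lexicographic scores the
equal split gives each agent, with probability close to 1, her t favourite items and thus nearly
the total score 2^m - 1; every optimal sequence does at least as well for the worst-off agent, so
all expected utilities are nearly equal.\<close>

section \<open>Scores of bundles\<close>

definition scoring_vector :: "(nat \<Rightarrow> real) \<Rightarrow> bool" where
  "scoring_vector s \<longleftrightarrow> antimono s \<and> (\<forall>i. 0 \<le> s i)"

lemma scoring_vector_le: "scoring_vector s \<Longrightarrow> i \<le> j \<Longrightarrow> s j \<le> s i"
  unfolding scoring_vector_def by (simp add: antimonoD)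

lemma scoring_vector_nonneg: "scoring_vector s \<Longrightarrow> 0 \<le> s i"
  unfolding scoring_vector_def by simp

lemma scoring_vector_shift: "scoring_vector s \<Longrightarrow> scoring_vector (\<lambda>i. s (Suc i))"
  unfolding scoring_vector_def by (auto intro!: antimonoI dest: antimonoD)

definition rank_weight :: "(nat \<Rightarrow> real) \<Rightarrow> nat list \<Rightarrow> nat set \<Rightarrow> real" where
  "rank_weight s r B = (\<Sum>j<length r. if r ! j \<in> B then s (Suc j) else 0)"

lemma rank_weight_Nil [simp]: "rank_weight s [] B = 0"
  unfolding rank_weight_def by simp

lemma rank_weight_empty [simp]: "rank_weight s r {} = 0"
  unfolding rank_weight_def by simp

lemma rank_weight_Cons:
  "rank_weight s (y # r) B = (if y \<in> B then s 1 else 0) + rank_weight (\<lambda>i. s (Suc i)) r B"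
  unfolding rank_weight_def by (simp only: length_Cons sum.lessThan_Suc_shift) simp

lemma rank_weight_nonneg: "scoring_vector s \<Longrightarrow> 0 \<le> rank_weight s r B"
  unfolding rank_weight_def by (intro sum_nonneg) (auto intro: scoring_vector_nonneg)

lemma rank_weight_mono: "scoring_vector s \<Longrightarrow> B \<subseteq> B' \<Longrightarrow> rank_weight s r B \<le> rank_weight s r B'"
  unfolding rank_weight_def by (intro sum_mono) (auto intro: scoring_vector_nonneg)

lemma rank_weight_disjoint: "set r \<inter> B = {} \<Longrightarrow> rank_weight s r B = 0"
  unfolding rank_weight_def by (intro sum.neutral) (auto dest: nth_mem)

lemma rank_weight_insert_notin: "z \<notin> set r \<Longrightarrow> rank_weight s r (insert z B) = rank_weight s r B"
  unfolding rank_weight_def by (intro sum.cong) (auto dest: nth_mem)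

lemma rank_weight_singleton_le: "distinct r \<Longrightarrow> scoring_vector s \<Longrightarrow> rank_weight s r {z} \<le> s 1"
proof (induction r arbitrary: s)
  case Nil
  then show ?case by (simp add: scoring_vector_nonneg)
next
  case (Cons y r)
  show ?case
  proof (cases "y = z")
    case True
    with Cons.prems have "rank_weight (\<lambda>i. s (Suc i)) r {z} = 0"
      by (intro rank_weight_disjoint) auto
    with True show ?thesis by (simp add: rank_weight_Cons)
  next
    case False
    have "rank_weight (\<lambda>i. s (Suc i)) r {z} \<le> s 2"
      using Cons.IH[of "\<lambda>i. s (Suc i)"] Cons.prems scoring_vector_shift
      by (simp add: numeral_2_eq_2)
    also have "s 2 \<le> s 1"
      using Cons.prems(2) by (rule scoring_vector_le) simp
    finally show ?thesis using False by (simp add: rank_weight_Cons)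
  qed
qed

lemma rank_weight_insert_le:
  assumes "distinct r" "scoring_vector s" "B \<subseteq> insert z B'"
  shows "rank_weight s r B \<le> rank_weight s r B' + s 1"
proof -
  have "rank_weight s r B \<le> rank_weight s r (insert z B')"
    using assms by (intro rank_weight_mono)
  also have "\<dots> \<le> rank_weight s r B' + rank_weight s r {z}"
    unfolding rank_weight_def sum.distrib[symmetric]
    by (intro sum_mono) (auto intro: scoring_vector_nonneg[OF assms(2)])
  also have "\<dots> \<le> rank_weight s r B' + s 1"
    using rank_weight_singleton_le[OF assms(1,2)] by simp
  finally show ?thesis .
qed

lemma set_take_Suc_subset: "set (take (Suc c) xs) \<subseteq> insert (xs ! c) (set (take c xs))"
  by (cases "c < length xs") (auto simp: take_Suc_conv_app_nth)

lemma rank_weight_take_Suc_le: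
  "distinct r \<Longrightarrow> scoring_vector s \<Longrightarrow>
   rank_weight s r (set (take (Suc c) xs)) \<le> rank_weight s r (set (take c xs)) + s 1"
  by (rule rank_weight_insert_le[OF _ _ set_take_Suc_subset])

lemma rank_weight_take_mono:
  "scoring_vector s \<Longrightarrow> c \<le> c' \<Longrightarrow> rank_weight s r (set (take c xs)) \<le> rank_weight s r (set (take c' xs))"
  by (intro rank_weight_mono set_take_subset_set_take)

lemma take_filter_subset_insert:
  assumes "\<And>y. Q y \<Longrightarrow> P y" "\<And>y. P y \<Longrightarrow> y = x \<or> Q y"
  shows "set (take c (filter P r)) \<subseteq> insert x (set (take c (filter Q r)))"
proof (induction r arbitrary: c)
  case Nil
  then show ?case by simp
next
  case (Cons y r)
  show ?case
  proof (cases c)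
    case 0
    then show ?thesis by simp
  next
    case (Suc c')
    have mono: "set (take c' (filter Q r)) \<subseteq> set (take c (filter Q r))"
      using Suc by (intro set_take_subset_set_take) simp
    consider "Q y" | "P y" "\<not> Q y" | "\<not> P y"
      by blast
    then show ?thesis
    proof cases
      case 1
      then show ?thesis using Cons.IH[of c'] Suc assms(1) by auto
    next
      case 2
      then have "y = x" using assms(2) by blast
      then show ?thesis using 2 Cons.IH[of c'] mono Suc by auto
    next
      case 3
      then show ?thesis using Cons.IH[of c] assms(1) by auto
    qed
  qed
qed

lemma picks_Cons:
  "picks (y # r) S (Suc c) = (if y \<in> S then y # picks r S c else picks r S (Suc c))"
  unfolding picks_def by simp

lemma rank_weight_picks_mono:
  assumes "scoring_vector s" "distinct r" "S \<subseteq> S'"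
  shows "rank_weight s r (set (picks r S c)) \<le> rank_weight s r (set (picks r S' c))"
  using assms(1,2)
proof (induction r arbitrary: s c)
  case Nil
  then show ?case by (simp add: picks_def)
next
  case (Cons y r)
  let ?s = "\<lambda>i. s (Suc i)"
  have IH: "rank_weight ?s r (set (picks r S c)) \<le> rank_weight ?s r (set (picks r S' c))" for c
    using Cons scoring_vector_shift by simp
  have y: "y \<notin> set r" and picks_r: "set (picks r T c) \<subseteq> set r" for T c
    using Cons.prems by (auto simp: picks_def dest: in_set_takeD)
  have drop_y: "rank_weight s (y # r) (set (picks r T c)) = rank_weight ?s r (set (picks r T c))" for T c
    using picks_r y by (auto simp: rank_weight_Cons)
  have take_y: "rank_weight s (y # r) (insert y (set (picks r T c))) = s 1 + rank_weight ?s r (set (picks r T c))" for T c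
    using y by (simp add: rank_weight_Cons rank_weight_insert_notin)
  show ?case
  proof (cases c)
    case 0
    then show ?thesis by (simp add: picks_def)
  next
    case (Suc c')
    consider "y \<in> S" | "y \<notin> S" "y \<in> S'" | "y \<notin> S'"
      using assms(3) by blast
    then show ?thesis
    proof cases
      case 1
      then have "y \<in> S'" using assms(3) by blast
      with 1 IH[of c'] Suc show ?thesis by (simp add: picks_Cons take_y)
    next
      case 2
      have "rank_weight ?s r (set (picks r S (Suc c'))) \<le> rank_weight ?s r (set (picks r S c')) + ?s 1"
        unfolding picks_def
        by (rule rank_weight_take_Suc_le) (use Cons.prems scoring_vector_shift in auto)
      moreover have "?s 1 \<le> s 1"
        using Cons.prems(1) by (rule scoring_vector_le) simp
      ultimately have "rank_weight ?s r (set (picks r S (Suc c'))) \<le> rank_weight ?s r (set (picks r S c')) + s 1"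
        by linarith
      with 2 IH[of c'] Suc show ?thesis by (simp add: picks_Cons take_y drop_y)
    next
      case 3
      then have "y \<notin> S" using assms(3) by blast
      with 3 IH[of c] Suc show ?thesis by (simp add: picks_Cons drop_y)
    qed
  qed
qed

lemma rank_weight_card_lower:
  assumes "distinct r" "B \<subseteq> set r" "scoring_vector s"
  shows "(\<Sum>i<card B. s (length r - i)) \<le> rank_weight s r B"
  using assms
proof (induction r arbitrary: s B)
  case Nil
  then show ?case by simp
next
  case (Cons y r)
  let ?s = "\<lambda>i. s (Suc i)"
  have y: "y \<notin> set r" and "distinct r" using Cons.prems by auto
  have IH: "(\<Sum>i<card B'. s (Suc (length r - i))) \<le> rank_weight ?s r B'" if "B' \<subseteq> set r" for B'
    using Cons.IH[OF \<open>distinct r\<close> that scoring_vector_shift[OF Cons.prems(3)]] .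
  have card_le: "card B' \<le> length r" if "B' \<subseteq> set r" for B'
    using card_mono[OF _ that] distinct_card[OF \<open>distinct r\<close>] by simp
  have shift: "(\<Sum>i<card B'. s (Suc (length r - i))) = (\<Sum>i<card B'. s (length (y # r) - i))"
    if "B' \<subseteq> set r" for B'
    using card_le[OF that] by (intro sum.cong) (auto simp: Suc_diff_le)
  show ?case
  proof (cases "y \<in> B")
    case True
    define B' where "B' = B - {y}"
    have B': "B' \<subseteq> set r" "B = insert y B'" "y \<notin> B'"
      using Cons.prems(2) True unfolding B'_def by auto
    then have card_B: "card B = Suc (card B')"
      using finite_subset[OF B'(1)] by simp
    have last_le: "s (length (y # r) - card B') \<le> s 1"
      using Cons.prems(3) card_le[OF B'(1)] by (intro scoring_vector_le) auto
    have "(\<Sum>i<card B. s (length (y # r) - i)) = (\<Sum>i<card B'. s (length (y # r) - i)) + s (length (y # r) - card B')"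
      using card_B by simp
    also have "\<dots> \<le> rank_weight ?s r B' + s 1"
      using IH[OF B'(1)] shift[OF B'(1)] last_le by linarith
    also have "\<dots> = rank_weight s (y # r) B"
      using B'(2) y by (simp add: rank_weight_Cons rank_weight_insert_notin)
    finally show ?thesis .
  next
    case False
    then have "B \<subseteq> set r" using Cons.prems(2) by auto
    then show ?thesis
      using IH shift False by (simp add: rank_weight_Cons)
  qed
qed

section \<open>Max-min allocations\<close>

text \<open>An agent's value g c M for picking c items when M items remain; D bounds the effect of a
single item.\<close>
definition regular_value :: "real \<Rightarrow> (nat \<Rightarrow> nat \<Rightarrow> real) \<Rightarrow> bool" where
  "regular_value D g \<longleftrightarrow> (\<forall>c M. 0 \<le> g c M) \<and> (\<forall>M. g 0 M = 0) \<and> (\<forall>c M. g c M \<le> g (Suc c) M)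
     \<and> (\<forall>c M. g (Suc c) M \<le> g c M + D) \<and> (\<forall>c M. g c M \<le> g c (Suc M))
     \<and> (\<forall>c M. g (Suc c) (Suc M) \<le> g c M + D)"

lemma regular_value_mono_items: "regular_value D g \<Longrightarrow> c \<le> c' \<Longrightarrow> g c M \<le> g c' M"
  unfolding regular_value_def by (rule lift_Suc_mono_le[of "\<lambda>c. g c M"]) auto

lemma regular_value_mono_remaining: "regular_value D g \<Longrightarrow> M \<le> M' \<Longrightarrow> g c M \<le> g c M'"
  unfolding regular_value_def by (rule lift_Suc_mono_le[of "g c"]) auto

lemma regular_value_step_nonneg: "regular_value D g \<Longrightarrow> 0 \<le> D"
  unfolding regular_value_def by (metis add_0 order_trans)

definition maxmin_split :: "(nat \<Rightarrow> nat \<Rightarrow> real) \<Rightarrow> (nat \<Rightarrow> real) \<Rightarrow> nat \<Rightarrow> real" where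
  "maxmin_split g f M = Max ((\<lambda>c. min (g c M) (f (M - c))) ` {..M})"

lemma maxmin_split_ge: "c \<le> M \<Longrightarrow> min (g c M) (f (M - c)) \<le> maxmin_split g f M"
  unfolding maxmin_split_def by (rule Max_ge) auto

lemma maxmin_split_attained: "\<exists>c\<le>M. maxmin_split g f M = min (g c M) (f (M - c))"
proof -
  have "maxmin_split g f M \<in> (\<lambda>c. min (g c M) (f (M - c))) ` {..M}"
    unfolding maxmin_split_def by (rule Max_in) auto
  then show ?thesis by auto
qed

lemma maxmin_split_nonneg:
  assumes "regular_value D g" "\<And>M. 0 \<le> f M"
  shows "0 \<le> maxmin_split g f M"
proof -
  obtain c where "c \<le> M" "maxmin_split g f M = min (g c M) (f (M - c))"
    using maxmin_split_attained by blast
  with assms show ?thesis unfolding regular_value_def by simp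
qed

lemma maxmin_split_zero: "regular_value D g \<Longrightarrow> f 0 = 0 \<Longrightarrow> maxmin_split g f 0 = 0"
  unfolding maxmin_split_def regular_value_def by simp

lemma maxmin_split_mono_Suc:
  assumes "regular_value D g" "mono f"
  shows "maxmin_split g f M \<le> maxmin_split g f (Suc M)"
proof -
  obtain c where c: "c \<le> M" "maxmin_split g f M = min (g c M) (f (M - c))"
    using maxmin_split_attained by blast
  have "min (g c M) (f (M - c)) \<le> min (g c (Suc M)) (f (Suc M - c))"
    using regular_value_mono_remaining[OF assms(1), of M "Suc M" c] monoD[OF assms(2), of "M - c" "Suc M - c"]
    by (auto simp: min_le_iff_disj)
  also have "\<dots> \<le> maxmin_split g f (Suc M)"
    using c(1) by (intro maxmin_split_ge) simp
  finally show ?thesis using c(2) by simp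
qed

lemma maxmin_split_Suc_le:
  assumes "regular_value D g" "\<And>M. 0 \<le> f M"
  shows "maxmin_split g f (Suc M) \<le> maxmin_split g f M + D"
proof -
  obtain c where c: "c \<le> Suc M" "maxmin_split g f (Suc M) = min (g c (Suc M)) (f (Suc M - c))"
    using maxmin_split_attained by blast
  show ?thesis
  proof (cases c)
    case 0
    then have "maxmin_split g f (Suc M) \<le> 0"
      using c(2) assms(1) unfolding regular_value_def by simp
    moreover have "0 \<le> maxmin_split g f M"
      using assms by (rule maxmin_split_nonneg)
    ultimately show ?thesis
      using regular_value_step_nonneg[OF assms(1)] by linarith
  next
    case (Suc d)
    have "g (Suc d) (Suc M) \<le> g d M + D"
      using assms(1) unfolding regular_value_def by blast
    then have "maxmin_split g f (Suc M) \<le> min (g d M) (f (M - d)) + D"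
      using c(2) Suc regular_value_step_nonneg[OF assms(1)] by (simp add: min_def)
    also have "min (g d M) (f (M - d)) \<le> maxmin_split g f M"
      using c(1) Suc by (intro maxmin_split_ge) simp
    finally show ?thesis by simp
  qed
qed

text \<open>The largest minimum value that agents with value functions gs, picking in this order, can
guarantee when M items remain.\<close>
fun maxmin_value :: "(nat \<Rightarrow> nat \<Rightarrow> real) list \<Rightarrow> nat \<Rightarrow> real" where
  "maxmin_value [] M = 0"
| "maxmin_value [g] M = g M M"
| "maxmin_value (g # h # gs) M = maxmin_split g (maxmin_value (h # gs)) M"

fun agent_values :: "(nat \<Rightarrow> nat \<Rightarrow> real) list \<Rightarrow> nat list \<Rightarrow> nat \<Rightarrow> real list" where
  "agent_values [] ks M = []"
| "agent_values gs [] M = []"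
| "agent_values (g # gs) (c # cs) M = g c M # agent_values gs cs (M - c)"

lemma maxmin_value_props:
  assumes "\<forall>g\<in>set gs. regular_value D g" "0 \<le> D"
  shows "(\<forall>M. 0 \<le> maxmin_value gs M) \<and> maxmin_value gs 0 = 0 \<and> mono (maxmin_value gs)
    \<and> (\<forall>M. maxmin_value gs (Suc M) \<le> maxmin_value gs M + D)"
  using assms(1)
proof (induction gs rule: induct_list012)
  case 1
  then show ?case by (simp add: mono_def assms(2))
next
  case (2 g)
  then have g: "regular_value D g" by simp
  have "g M M \<le> g (Suc M) (Suc M)" for M
    using regular_value_mono_items[OF g, of M "Suc M" M] regular_value_mono_remaining[OF g, of M "Suc M" "Suc M"]
    by simp
  with g show ?case unfolding regular_value_def by (simp add: mono_iff_le_Suc)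
next
  case (3 g h gs)
  then have "regular_value D g" "\<forall>g\<in>set (h # gs). regular_value D g" by simp_all
  with 3(2) show ?case
    by (simp add: mono_iff_le_Suc maxmin_split_nonneg maxmin_split_zero maxmin_split_mono_Suc
        maxmin_split_Suc_le)
qed

lemma exists_agent_value_le_maxmin:
  assumes "gs \<noteq> []" "length ks = length gs" "sum_list ks = M"
  shows "\<exists>v\<in>set (agent_values gs ks M). v \<le> maxmin_value gs M"
  using assms
proof (induction gs arbitrary: M ks rule: induct_list012)
  case 1
  then show ?case by simp
next
  case (2 g M)
  then obtain c where "ks = [c]" by (cases ks) auto
  with 2 show ?case by simp
next
  case (3 g h gs M)
  then obtain c ks' where ks: "ks = c # ks'" "c \<le> M" "length ks' = length (h # gs)" "sum_list ks' = M - c"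
    by (cases ks) auto
  obtain v where v: "v \<in> set (agent_values (h # gs) ks' (M - c))" "v \<le> maxmin_value (h # gs) (M - c)"
    using 3(2)[OF _ ks(3,4)] by blast
  have "min (g c M) (maxmin_value (h # gs) (M - c)) \<le> maxmin_value (g # h # gs) M"
    using ks(2) by (simp add: maxmin_split_ge)
  then show ?case
    using ks(1) v by (cases "g c M \<le> maxmin_value (h # gs) (M - c)") force+
qed

lemma exists_near_crossing:
  fixes h1 h2 :: "nat \<Rightarrow> real"
  assumes mono1: "\<And>a b. a \<le> b \<Longrightarrow> h1 a \<le> h1 b"
    and antimono2: "\<And>a b. a \<le> b \<Longrightarrow> b \<le> M \<Longrightarrow> h2 b \<le> h2 a"
    and step1: "\<And>c. h1 (Suc c) \<le> h1 c + D"
    and step2: "\<And>c. c < M \<Longrightarrow> h2 c \<le> h2 (Suc c) + D"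
    and end_M: "h2 M \<le> h1 M" and end_0: "h1 0 \<le> h2 0"
  shows "\<exists>c\<le>M. (\<forall>c'\<le>M. min (h1 c') (h2 c') \<le> min (h1 c) (h2 c))
    \<and> h1 c \<le> h2 c + 2 * D \<and> h2 c \<le> h1 c + 2 * D"
proof -
  define k where "k = (LEAST c. h2 c \<le> h1 c)"
  have k: "h2 k \<le> h1 k" "k \<le> M"
    unfolding k_def using end_M by (auto intro: LeastI Least_le)
  show ?thesis
  proof (cases k)
    case 0
    with k end_0 have eq: "h1 0 = h2 0" by simp
    have "\<forall>c'\<le>M. min (h1 c') (h2 c') \<le> min (h1 0) (h2 0)"
      using antimono2[of 0] eq by (auto simp: min_le_iff_disj)
    moreover have "0 \<le> D" using step1[of 0] mono1[of 0 "Suc 0"] by linarith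
    ultimately show ?thesis using eq by (intro exI[of _ 0]) auto
  next
    case (Suc p)
    have p: "h1 p < h2 p"
      using not_less_Least[of p "\<lambda>c. h2 c \<le> h1 c"] Suc unfolding k_def by auto
    have max_bound: "\<forall>c'\<le>M. min (h1 c') (h2 c') \<le> max (h2 k) (h1 p)"
    proof (intro allI impI)
      fix c' assume c': "c' \<le> M"
      show "min (h1 c') (h2 c') \<le> max (h2 k) (h1 p)"
      proof (cases "k \<le> c'")
        case True
        then show ?thesis using antimono2[of k c'] c' by (auto simp: min_le_iff_disj)
      next
        case False
        then show ?thesis using mono1[of c' p] Suc by (auto simp: min_le_iff_disj)
      qed
    qed
    have gaps: "h1 k \<le> h2 k + 2 * D" "h2 p \<le> h1 p + 2 * D"
      using step1[of p] step2[of p] p k Suc by auto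
    show ?thesis
    proof (cases "h1 p \<le> h2 k")
      case True
      then show ?thesis using max_bound k gaps by (intro exI[of _ k]) (auto simp: min_def)
    next
      case False
      then show ?thesis using max_bound p k gaps Suc by (intro exI[of _ p]) (auto simp: min_def)
    qed
  qed
qed

text \<open>The first agent's value increases and the others' optimum decreases in her share, both in steps
of at most D, so near their crossing point they differ by at most 2 D.\<close>
lemma maxmin_split_near_balanced:
  assumes g: "regular_value D g" and f: "mono f" "f 0 = 0" "\<And>M. 0 \<le> f M" "\<And>M. f (Suc M) \<le> f M + D"
  shows "\<exists>c\<le>M. maxmin_split g f M = min (g c M) (f (M - c))
    \<and> g c M \<le> f (M - c) + 2 * D \<and> f (M - c) \<le> g c M + 2 * D"
proof -
  have "\<exists>c\<le>M. (\<forall>c'\<le>M. min (g c' M) (f (M - c')) \<le> min (g c M) (f (M - c)))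
    \<and> g c M \<le> f (M - c) + 2 * D \<and> f (M - c) \<le> g c M + 2 * D"
  proof (rule exists_near_crossing)
    show "g a M \<le> g b M" if "a \<le> b" for a b
      using regular_value_mono_items[OF g that] .
    show "f (M - b) \<le> f (M - a)" if "a \<le> b" for a b
      using monoD[OF f(1)] that by simp
    show "g (Suc c) M \<le> g c M + D" for c
      using g unfolding regular_value_def by blast
    show "f (M - c) \<le> f (M - Suc c) + D" if "c < M" for c
      using f(4)[of "M - Suc c"] that by (simp add: Suc_diff_Suc)
    show "f (M - M) \<le> g M M" "g 0 M \<le> f (M - 0)"
      using g f(2,3) unfolding regular_value_def by auto
  qed
  then obtain c where c: "c \<le> M" "\<forall>c'\<le>M. min (g c' M) (f (M - c')) \<le> min (g c M) (f (M - c))"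
    "g c M \<le> f (M - c) + 2 * D" "f (M - c) \<le> g c M + 2 * D"
    by blast
  obtain c' where "c' \<le> M" "maxmin_split g f M = min (g c' M) (f (M - c'))"
    using maxmin_split_attained by blast
  with c(2) have "maxmin_split g f M \<le> min (g c M) (f (M - c))"
    by simp
  with maxmin_split_ge[OF c(1), of g f] have "maxmin_split g f M = min (g c M) (f (M - c))"
    by linarith
  with c show ?thesis by blast
qed

lemma exists_allocation_near_maxmin:
  assumes "\<forall>g\<in>set gs. regular_value D g" "gs \<noteq> []"
  shows "\<exists>ks. length ks = length gs \<and> sum_list ks = M \<and>
    (\<forall>v\<in>set (agent_values gs ks M). maxmin_value gs M \<le> v \<and> v \<le> maxmin_value gs M + 2 * D * length gs)"
  using assms
proof (induction gs arbitrary: M rule: induct_list012)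
  case 1
  then show ?case by simp
next
  case (2 g M)
  then have "0 \<le> D" by (simp add: regular_value_step_nonneg)
  then show ?case by (intro exI[of _ "[M]"]) auto
next
  case (3 g h gs M)
  have g: "regular_value D g" and rest: "\<forall>g\<in>set (h # gs). regular_value D g"
    using 3(3) by simp_all
  have D: "0 \<le> D" using regular_value_step_nonneg[OF g] .
  let ?f = "maxmin_value (h # gs)"
  obtain c where c: "c \<le> M" "maxmin_value (g # h # gs) M = min (g c M) (?f (M - c))"
    "g c M \<le> ?f (M - c) + 2 * D" "?f (M - c) \<le> g c M + 2 * D"
    using maxmin_split_near_balanced[OF g, of ?f M] maxmin_value_props[OF rest D] by auto
  obtain ks where ks: "length ks = length (h # gs)" "sum_list ks = M - c"
    "\<forall>v\<in>set (agent_values (h # gs) ks (M - c)). ?f (M - c) \<le> v \<and> v \<le> ?f (M - c) + 2 * D * length (h # gs)"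
    using 3(2)[OF rest] by blast
  let ?E = "2 * D * length (h # gs)"
  have E: "0 \<le> ?E" "2 * D * length (g # h # gs) = ?E + 2 * D"
    using D by (simp_all add: algebra_simps)
  show ?case
  proof (intro exI[of _ "c # ks"] conjI ballI)
    show "length (c # ks) = length (g # h # gs)" "sum_list (c # ks) = M"
      using ks c(1) by simp_all
  next
    fix v assume v: "v \<in> set (agent_values (g # h # gs) (c # ks) M)"
    have "min (g c M) (?f (M - c)) \<le> v \<and> v \<le> min (g c M) (?f (M - c)) + (?E + 2 * D)"
    proof (cases "v = g c M")
      case True
      then show ?thesis using c(3) E(1) D by (smt (verit) min_def)
    next
      case False
      then have "?f (M - c) \<le> v \<and> v \<le> ?f (M - c) + ?E"
        using v ks(3) by simp
      then show ?thesis using c(4) D by (smt (verit) min_def)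
    qed
    then show "maxmin_value (g # h # gs) M \<le> v"
      and "v \<le> maxmin_value (g # h # gs) M + 2 * D * length (g # h # gs)"
      unfolding E(2) c(2) by blast+
  qed
qed

section \<open>The picking model\<close>

lemma rankingsD: "r \<in> rankings m \<Longrightarrow> distinct r \<and> set r = {..<m} \<and> length r = m"
  unfolding rankings_def using distinct_card by fastforce

lemma finite_rankings: "finite (rankings m)"
proof (rule finite_subset)
  show "rankings m \<subseteq> {xs. set xs \<subseteq> {..<m} \<and> length xs = m}"
    using rankingsD by auto
qed (rule finite_lists_length_eq, simp)

lemma finite_profiles: "finite (profiles n m)"
  unfolding profiles_def by (intro finite_PiE) (auto simp: finite_rankings)

lemma profiles_nonempty: "profiles n m \<noteq> {}"
proof -
  have "(\<lambda>i. if i < n then [0..<m] else undefined) \<in> profiles n m"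
    unfolding profiles_def rankings_def by (auto simp: PiE_iff extensional_def)
  then show ?thesis by blast
qed

lemma profiles_ranking: "P \<in> profiles n m \<Longrightarrow> a < n \<Longrightarrow> P a \<in> rankings m"
  unfolding profiles_def by (auto simp: PiE_iff)

lemma profiles_fun_upd:
  assumes "P \<in> profiles n m" "a < n" "r \<in> rankings m"
  shows "P(a := r) \<in> profiles n m"
proof -
  have "P(a := r) \<in> Pi\<^sub>E (insert a {..<n}) (\<lambda>_. rankings m)"
    using assms unfolding profiles_def by (intro PiE_fun_upd) auto
  with assms(2) show ?thesis unfolding profiles_def by (simp add: insert_absorb)
qed

lemma set_picks_subset: "set (picks r S c) \<subseteq> S"
  unfolding picks_def by (auto dest: in_set_takeD)

lemma card_set_picks:
  assumes "r \<in> rankings m" "S \<subseteq> {..<m}"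
  shows "card (set (picks r S c)) = min c (card S)"
proof -
  let ?xs = "filter (\<lambda>x. x \<in> S) r"
  have "distinct ?xs" "set ?xs = S"
    using rankingsD[OF assms(1)] assms(2) by auto
  then have "length ?xs = card S"
    using distinct_card by fastforce
  with \<open>distinct ?xs\<close> show ?thesis
    unfolding picks_def by (simp add: distinct_card)
qed

lemma remaining_subset_card:
  assumes "P \<in> profiles n m" "i \<le> n" "(\<Sum>l<i. k l) \<le> m"
  shows "remaining m P k i \<subseteq> {..<m} \<and> card (remaining m P k i) = m - (\<Sum>l<i. k l)"
  using assms(2,3)
proof (induction i)
  case 0
  then show ?case by simp
next
  case (Suc i)
  let ?R = "remaining m P k i"
  let ?p = "set (picks (P i) ?R (k i))"
  have IH: "?R \<subseteq> {..<m}" "card ?R = m - (\<Sum>l<i. k l)"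
    using Suc by simp_all
  have "?p \<subseteq> ?R" "card ?p = k i"
    using set_picks_subset card_set_picks[OF profiles_ranking[OF assms(1)] IH(1)] Suc.prems IH(2)
    by auto
  moreover have "finite ?R"
    using IH(1) finite_subset by blast
  ultimately show ?case
    using IH Suc.prems by (auto simp: card_Diff_subset intro: finite_subset)
qed

lemma remaining_cong: "(\<And>l. l < i \<Longrightarrow> P l = Q l) \<Longrightarrow> remaining m P k i = remaining m Q k i"
  by (induction i) auto

lemma exists_permutation_onto_initial:
  assumes "S \<subseteq> {..<m}" "card S = M"
  shows "\<exists>\<pi>. bij_betw \<pi> {..<m} {..<m} \<and> \<pi> ` S = {..<M}"
proof -
  have fS: "finite S" using assms(1) finite_subset by blast
  have Mm: "M \<le> m" using card_mono[OF _ assms(1)] assms(2) by simp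
  obtain f where f: "bij_betw f S {..<M}"
    using finite_same_card_bij[OF fS, of "{..<M}"] assms(2) by auto
  obtain h where h: "bij_betw h ({..<m} - S) ({..<m} - {..<M})"
    using finite_same_card_bij[of "{..<m} - S" "{..<m} - {..<M}"] assms Mm
    by (auto simp: card_Diff_subset fS)
  define \<pi> where "\<pi> x = (if x \<in> S then f x else h x)" for x
  have S: "bij_betw \<pi> S {..<M}"
    using f by (rule bij_betw_cong[THEN iffD1, rotated]) (simp add: \<pi>_def)
  moreover have "bij_betw \<pi> ({..<m} - S) ({..<m} - {..<M})"
    using h by (rule bij_betw_cong[THEN iffD1, rotated]) (simp add: \<pi>_def)
  ultimately have "bij_betw \<pi> (S \<union> ({..<m} - S)) ({..<M} \<union> ({..<m} - {..<M}))"
    by (intro bij_betw_combine) auto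
  moreover have "S \<union> ({..<m} - S) = {..<m}" "{..<M} \<union> ({..<m} - {..<M}) = {..<m}"
    using assms(1) Mm by auto
  ultimately have "bij_betw \<pi> {..<m} {..<m}"
    by simp
  moreover have "\<pi> ` S = {..<M}"
    using S bij_betw_imp_surj_on by blast
  ultimately show ?thesis by blast
qed

lemma map_permutation_rankings:
  "bij_betw \<pi> {..<m} {..<m} \<Longrightarrow> r \<in> rankings m \<Longrightarrow> map \<pi> r \<in> rankings m"
  unfolding rankings_def bij_betw_def by (auto simp: distinct_map inj_on_subset)

lemma picks_map:
  assumes "inj_on \<pi> {..<m}" "set r \<subseteq> {..<m}" "S \<subseteq> {..<m}"
  shows "picks (map \<pi> r) (\<pi> ` S) c = map \<pi> (picks r S c)"
proof -
  have "filter (\<lambda>x. x \<in> \<pi> ` S) (map \<pi> r) = map \<pi> (filter (\<lambda>x. x \<in> S) r)"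
    unfolding filter_map
  proof (intro arg_cong[where f = "map \<pi>"] filter_cong refl)
    fix x assume "x \<in> set r"
    then have "x \<in> {..<m}" using assms(2) by blast
    then show "((\<lambda>x. x \<in> \<pi> ` S) \<circ> \<pi>) x = (x \<in> S)"
      using inj_on_image_mem_iff[OF assms(1) _ assms(3)] by simp
  qed
  then show ?thesis unfolding picks_def by (simp add: take_map)
qed

lemma rank_weight_map:
  assumes "inj_on \<pi> {..<m}" "set r \<subseteq> {..<m}" "B \<subseteq> {..<m}"
  shows "rank_weight s (map \<pi> r) (\<pi> ` B) = rank_weight s r B"
  unfolding rank_weight_def using assms inj_on_image_mem_iff[OF assms(1)]
  by (auto intro!: sum.cong dest: nth_mem)

lemma bij_betw_relabel_agent:
  assumes a: "a < n"
    and perm: "\<And>P. P \<in> profiles n m \<Longrightarrow> bij_betw (\<pi> P) {..<m} {..<m}"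
    and local: "\<And>P Q. (\<And>l. l \<noteq> a \<Longrightarrow> P l = Q l) \<Longrightarrow> \<pi> P = \<pi> Q"
  shows "bij_betw (\<lambda>P. P(a := map (\<pi> P) (P a))) (profiles n m) (profiles n m)"
proof -
  let ?\<Phi> = "\<lambda>P. P(a := map (\<pi> P) (P a))"
  have into: "?\<Phi> P \<in> profiles n m" if "P \<in> profiles n m" for P
    using that a perm by (intro profiles_fun_upd map_permutation_rankings profiles_ranking)
  have "inj_on ?\<Phi> (profiles n m)"
  proof (rule inj_onI)
    fix P Q assume P: "P \<in> profiles n m" and Q: "Q \<in> profiles n m" and eq: "?\<Phi> P = ?\<Phi> Q"
    have off_a: "P l = Q l" if "l \<noteq> a" for l
      using fun_cong[OF eq, of l] that by simp
    then have "map (\<pi> P) (P a) = map (\<pi> P) (Q a)"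
      using fun_cong[OF eq, of a] local[of P Q] by simp
    moreover have "inj_on (\<pi> P) (set (P a) \<union> set (Q a))"
      using perm[OF P] rankingsD[OF profiles_ranking[OF P a]] rankingsD[OF profiles_ranking[OF Q a]]
      unfolding bij_betw_def by simp
    ultimately have "P a = Q a"
      using inj_on_map_eq_map by blast
    with off_a show "P = Q" by (metis ext)
  qed
  moreover have "?\<Phi> ` profiles n m = profiles n m"
    using into by (intro endo_inj_surj[OF finite_profiles _ \<open>inj_on ?\<Phi> _\<close>]) auto
  ultimately show ?thesis unfolding bij_betw_def by blast
qed

lemma utility_eq_rank_weight:
  "P a \<in> rankings m \<Longrightarrow> utility m s P k a = rank_weight s (P a) (agent_bundle m P k a)"
  unfolding utility_def rank_weight_def using rankingsD by auto

definition pick_value :: "nat \<Rightarrow> nat \<Rightarrow> (nat \<Rightarrow> real) \<Rightarrow> nat \<Rightarrow> nat \<Rightarrow> nat \<Rightarrow> real" where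
  "pick_value n m s a c M =
     (\<Sum>P\<in>profiles n m. rank_weight s (P a) (set (picks (P a) {..<M} c))) / card (profiles n m)"

text \<open>The remaining items can be relabelled as 0, ..., M - 1 without changing the distribution of
the profiles.\<close>
lemma EU_eq_pick_value:
  assumes a: "a < n" and km: "(\<Sum>l<a. k l) \<le> m"
  shows "EU n m s k a = pick_value n m s a (k a) (m - (\<Sum>l<a. k l))"
proof -
  define M where "M = m - (\<Sum>l<a. k l)"
  define R where "R P = remaining m P k a" for P
  define \<pi> where "\<pi> P = (SOME \<pi>. bij_betw \<pi> {..<m} {..<m} \<and> \<pi> ` R P = {..<M})" for P
  define w where "w P = rank_weight s (P a) (set (picks (P a) {..<M} (k a)))" for P
  have R: "R P \<subseteq> {..<m}" "card (R P) = M" if "P \<in> profiles n m" for P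
    using remaining_subset_card[OF that, of a k] a km unfolding R_def M_def by simp_all
  have \<pi>: "bij_betw (\<pi> P) {..<m} {..<m}" "\<pi> P ` R P = {..<M}" if "P \<in> profiles n m" for P
    using someI_ex[OF exists_permutation_onto_initial[OF R[OF that]]] unfolding \<pi>_def by blast+
  have local: "\<pi> P = \<pi> Q" if "\<And>l. l \<noteq> a \<Longrightarrow> P l = Q l" for P Q
    using remaining_cong[of a P Q m k] that unfolding \<pi>_def R_def by simp
  have relabel: "w (P(a := map (\<pi> P) (P a))) = utility m s P k a" if P: "P \<in> profiles n m" for P
  proof -
    have inj: "inj_on (\<pi> P) {..<m}" and r: "set (P a) \<subseteq> {..<m}"
      using \<pi>(1)[OF P] rankingsD[OF profiles_ranking[OF P a]] unfolding bij_betw_def by simp_all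
    have "w (P(a := map (\<pi> P) (P a))) = rank_weight s (map (\<pi> P) (P a)) (\<pi> P ` set (picks (P a) (R P) (k a)))"
      unfolding w_def using picks_map[OF inj r R(1)[OF P]] \<pi>(2)[OF P] by simp
    also have "\<dots> = rank_weight s (P a) (set (picks (P a) (R P) (k a)))"
      using set_picks_subset R(1)[OF P] by (intro rank_weight_map[OF inj r]) blast
    finally show ?thesis
      using utility_eq_rank_weight[of P a m s k, OF profiles_ranking[OF P a]] unfolding agent_bundle_def R_def by simp
  qed
  have "(\<Sum>P\<in>profiles n m. w P) = (\<Sum>P\<in>profiles n m. w (P(a := map (\<pi> P) (P a))))"
    by (rule sum.reindex_bij_betw[OF bij_betw_relabel_agent[OF a \<pi>(1) local], symmetric])
  also have "\<dots> = (\<Sum>P\<in>profiles n m. utility m s P k a)"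
    by (rule sum.cong[OF refl relabel])
  finally show ?thesis
    unfolding EU_def pick_value_def M_def[symmetric] w_def by simp
qed

section \<open>Nearly balanced optimal picking sequences\<close>

lemma average_le_add:
  fixes f h :: "'a \<Rightarrow> real"
  assumes "finite A" "A \<noteq> {}" "\<And>x. x \<in> A \<Longrightarrow> f x \<le> h x + C"
  shows "sum f A / card A \<le> sum h A / card A + C"
proof -
  have pos: "0 < real (card A)"
    using assms(1,2) by (simp add: card_gt_0_iff)
  have "sum f A \<le> sum h A + card A * C"
    using sum_mono[of A f "\<lambda>x. h x + C"] assms(3) by (simp add: sum.distrib)
  with pos show ?thesis
    by (simp add: divide_simps) (simp add: algebra_simps)
qed

lemma average_mono:
  fixes f h :: "'a \<Rightarrow> real"
  assumes "finite A" "A \<noteq> {}" "\<And>x. x \<in> A \<Longrightarrow> f x \<le> h x"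
  shows "sum f A / card A \<le> sum h A / card A"
  using average_le_add[of A f h 0] assms by simp

lemma average_ge:
  fixes f :: "'a \<Rightarrow> real"
  assumes "finite A" "A \<noteq> {}" "\<And>x. x \<in> A \<Longrightarrow> C \<le> f x"
  shows "C \<le> sum f A / card A"
  using average_le_add[of A "\<lambda>_. C" f 0] assms by simp

lemma regular_value_pick_value:
  assumes a: "a < n" and s: "scoring_vector s"
  shows "regular_value (2 * s 1) (pick_value n m s a)"
proof -
  have s1: "0 \<le> s 1" using scoring_vector_nonneg[OF s] .
  have r: "distinct (P a)" if "P \<in> profiles n m" for P
    using rankingsD[OF profiles_ranking[OF that a]] by blast
  note average = finite_profiles profiles_nonempty
  note defs = pick_value_def picks_def
  have Suc_both: "rank_weight s (P a) (set (picks (P a) {..<Suc M} (Suc c)))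
      \<le> rank_weight s (P a) (set (picks (P a) {..<M} c)) + 2 * s 1"
    if P: "P \<in> profiles n m" for P c M
  proof -
    have "set (picks (P a) {..<Suc M} (Suc c)) \<subseteq> insert M (set (picks (P a) {..<M} (Suc c)))"
      unfolding picks_def by (rule take_filter_subset_insert) auto
    then have "rank_weight s (P a) (set (picks (P a) {..<Suc M} (Suc c)))
       \<le> rank_weight s (P a) (set (picks (P a) {..<M} (Suc c))) + s 1"
      by (rule rank_weight_insert_le[OF r[OF P] s])
    also have "\<dots> \<le> rank_weight s (P a) (set (picks (P a) {..<M} c)) + s 1 + s 1"
      using rank_weight_take_Suc_le[OF r[OF P] s, of c "filter (\<lambda>x. x \<in> {..<M}) (P a)"]
      unfolding picks_def by linarith
    finally show ?thesis by simp
  qed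
  show ?thesis
    unfolding regular_value_def
  proof (intro conjI allI)
    show "0 \<le> pick_value n m s a c M" for c M
      unfolding pick_value_def by (intro divide_nonneg_nonneg sum_nonneg rank_weight_nonneg[OF s]) auto
    show "pick_value n m s a 0 M = 0" for M
      unfolding defs by simp
    show "pick_value n m s a c M \<le> pick_value n m s a (Suc c) M" for c M
      unfolding defs by (intro average_mono average rank_weight_take_mono[OF s]) simp
    show "pick_value n m s a (Suc c) M \<le> pick_value n m s a c M + 2 * s 1" for c M
      unfolding defs using s1 rank_weight_take_Suc_le[OF r s]
      by (intro average_le_add average) (smt (verit))
    show "pick_value n m s a c M \<le> pick_value n m s a c (Suc M)" for c M
      unfolding pick_value_def by (intro average_mono average rank_weight_picks_mono[OF s r]) auto
    show "pick_value n m s a (Suc c) (Suc M) \<le> pick_value n m s a c M + 2 * s 1" for c M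
      unfolding pick_value_def by (intro average_le_add average Suc_both)
  qed
qed

lemma agent_values_upt:
  "agent_values (map G [j..<n]) (map k [j..<n]) M = map (\<lambda>i. G i (k i) (M - sum k {j..<i})) [j..<n]"
proof (induction "n - j" arbitrary: j M)
  case 0
  then show ?case by simp
next
  case (Suc d)
  then have "j < n" by simp
  have "map (\<lambda>i. G i (k i) (M - k j - sum k {Suc j..<i})) [Suc j..<n]
      = map (\<lambda>i. G i (k i) (M - sum k {j..<i})) [Suc j..<n]"
    by (intro map_cong refl) (simp add: sum.atLeast_Suc_lessThan)
  with Suc(1)[of "Suc j" "M - k j"] Suc(2) \<open>j < n\<close> show ?case
    by (simp add: upt_conv_Cons)
qed

lemma set_agent_values_EU:
  assumes "k \<in> kvecs n m"
  shows "set (agent_values (map (pick_value n m s) [0..<n]) (map k [0..<n]) m) = (\<lambda>a. EU n m s k a) ` {..<n}"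
proof -
  have "sum k {..<i} \<le> m" if "i < n" for i
    using sum_mono2[of "{..<n}" "{..<i}" k] that assms unfolding kvecs_def by auto
  then show ?thesis
    unfolding agent_values_upt by (auto simp: EU_eq_pick_value atLeast0LessThan)
qed

lemma sum_list_map_upt: "sum_list (map k [0..<n]) = (\<Sum>i<n. k i)"
  using sum_set_upt_conv_sum_list_nat[of k 0 n] by (simp add: atLeast0LessThan)

text \<open>Agents' values are regular with step 2 s 1, so the balanced allocation of the max-min
recursion is an optimal picking sequence whose expected utilities differ by at most 4 s 1 n.\<close>
lemma exists_optimal_sequence_near_equal:
  assumes n: "1 \<le> n" and s: "scoring_vector s"
  shows "\<exists>k\<in>Kstar n m s. \<exists>L. (\<forall>k'\<in>kvecs n m. SW_e n m s k' \<le> L) \<and>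
            (\<forall>a<n. L \<le> EU n m s k a \<and> EU n m s k a \<le> L + 4 * s 1 * n)"
proof -
  define gs where "gs = map (pick_value n m s) [0..<n]"
  have gs: "gs \<noteq> []" "length gs = n" "\<forall>g\<in>set gs. regular_value (2 * s 1) g"
    using n regular_value_pick_value[OF _ s] unfolding gs_def by auto
  obtain ks where ks: "length ks = n" "sum_list ks = m"
    "\<forall>v\<in>set (agent_values gs ks m). maxmin_value gs m \<le> v \<and> v \<le> maxmin_value gs m + 4 * s 1 * n"
    using exists_allocation_near_maxmin[OF gs(3,1), of m] gs(2) by (auto simp: algebra_simps)
  define k where "k i = (if i < n then ks ! i else 0)" for i
  have map_k: "map k [0..<n] = ks"
    using ks(1) by (intro nth_equalityI) (auto simp: k_def)
  have k: "k \<in> kvecs n m"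
    unfolding kvecs_def using ks(2) sum_list_map_upt[of k n] map_k by (auto simp: k_def)
  have near: "\<forall>a<n. maxmin_value gs m \<le> EU n m s k a \<and> EU n m s k a \<le> maxmin_value gs m + 4 * s 1 * n"
    using ks(3) set_agent_values_EU[OF k, of s] map_k unfolding gs_def by auto
  have upper: "SW_e n m s k' \<le> maxmin_value gs m" if k': "k' \<in> kvecs n m" for k'
  proof -
    obtain v where v: "v \<in> set (agent_values gs (map k' [0..<n]) m)" "v \<le> maxmin_value gs m"
      using exists_agent_value_le_maxmin[OF gs(1), of "map k' [0..<n]" m] gs(2) k' sum_list_map_upt[of k' n]
      unfolding kvecs_def by auto
    then have "SW_e n m s k' \<le> v"
      using set_agent_values_EU[OF k', of s] unfolding SW_e_def gs_def by (intro Min_le) auto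
    with v(2) show ?thesis by simp
  qed
  have "maxmin_value gs m \<le> SW_e n m s k"
    unfolding SW_e_def using near n by (intro Min.boundedI) (auto simp: lessThan_empty_iff)
  with k upper have "k \<in> Kstar n m s"
    unfolding Kstar_def by (auto intro: order_trans)
  with upper near show ?thesis by blast
qed

lemma spread_ratio_le:
  fixes f :: "nat \<Rightarrow> real"
  assumes n: "1 \<le> n" and bounds: "\<forall>a<n. L \<le> f a \<and> f a \<le> U" and L: "0 < L"
  shows "(Max (f ` {..<n}) - Min (f ` {..<n})) / (\<Sum>a<n. f a) \<le> (U - L) / L"
proof -
  have ne: "f ` {..<n} \<noteq> {}" using n by (simp add: lessThan_empty_iff)
  have "Max (f ` {..<n}) \<le> U" "L \<le> Min (f ` {..<n})"
    using bounds ne by (auto intro: Max.boundedI Min.boundedI)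
  moreover have "L \<le> (\<Sum>a<n. f a)"
    using member_le_sum[of 0 "{..<n}" f] n bounds L by force
  moreover have "Min (f ` {..<n}) \<le> f 0" "f 0 \<le> Max (f ` {..<n})"
    using n by (auto intro: Min_le Max_ge)
  ultimately show ?thesis
    using L by (intro frac_le) auto
qed

section \<open>The equal split\<close>

definition equal_split :: "nat \<Rightarrow> nat \<Rightarrow> nat \<Rightarrow> nat \<Rightarrow> nat" where
  "equal_split n m t i = (if i < n - 1 then t else if i = n - 1 then m - (n - 1) * t else 0)"

lemma equal_split_prefix_sum: "i \<le> n - 1 \<Longrightarrow> (\<Sum>l<i. equal_split n m t l) = i * t"
  by (simp add: equal_split_def)

lemma equal_split_in_kvecs:
  assumes "1 \<le> n" "n * t \<le> m"
  shows "equal_split n m t \<in> kvecs n m"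
proof -
  have "(n - 1) * t \<le> m"
    using assms by (metis diff_le_self le_trans mult_le_mono1)
  have "(\<Sum>l<n. equal_split n m t l) = (\<Sum>l<n - 1. equal_split n m t l) + equal_split n m t (n - 1)"
    using assms(1) sum.lessThan_Suc[of "equal_split n m t" "n - 1"] by simp
  also have "\<dots> = m"
    using equal_split_prefix_sum[of "n - 1" n m t] \<open>(n - 1) * t \<le> m\<close> by (simp add: equal_split_def)
  finally show ?thesis
    unfolding kvecs_def using assms(1) by (auto simp: equal_split_def)
qed

lemma equal_split_bounds:
  assumes "n * t \<le> m" "i < n"
  shows "t \<le> equal_split n m t i" "(\<Sum>l<i. equal_split n m t l) = i * t"
    "i * t + equal_split n m t i \<le> m"
proof -
  have last: "(n - 1) * t + t \<le> m"
    using assms by (cases n) (simp_all add: algebra_simps)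
  have prefix: "i * t \<le> (n - 1) * t"
    using assms(2) by (intro mult_right_mono) simp_all
  show "i * t + equal_split n m t i \<le> m"
  proof (cases "i < n - 1")
    case True
    then have "equal_split n m t i = t" by (simp add: equal_split_def)
    with last prefix show ?thesis by linarith
  next
    case False
    with assms(2) have "i = n - 1" by simp
    with last show ?thesis by (simp add: equal_split_def)
  qed
  have "i < n - 1 \<or> i = n - 1"
    using assms(2) by linarith
  with last show "t \<le> equal_split n m t i"
    by (auto simp: equal_split_def)
  show "(\<Sum>l<i. equal_split n m t l) = i * t"
    using assms(2) by (intro equal_split_prefix_sum) simp
qed

lemma EU_equal_split:
  assumes "n * t \<le> m" "a < n"
  shows "EU n m s (equal_split n m t) a = pick_value n m s a (equal_split n m t a) (m - a * t)"
  using EU_eq_pick_value[OF assms(2)] equal_split_bounds[OF assms] by simp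

lemma SW_e_ge:
  assumes "1 \<le> n" "\<And>a. a < n \<Longrightarrow> L \<le> EU n m s k a"
  shows "L \<le> SW_e n m s k"
  unfolding SW_e_def using assms by (intro Min.boundedI) (auto simp: lessThan_empty_iff)

section \<open>Borda scores\<close>

lemma scoring_vector_borda: "scoring_vector (borda_score m)"
  unfolding scoring_vector_def borda_score_def by (auto intro: antimonoI)

lemma pick_value_borda_ge:
  assumes a: "a < n" and "c \<le> M" "M \<le> m"
  shows "real c * c / 2 \<le> pick_value n m (borda_score m) a c M"
  unfolding pick_value_def
proof (rule average_ge[OF finite_profiles profiles_nonempty])
  fix P assume P: "P \<in> profiles n m"
  let ?B = "set (picks (P a) {..<M} c)"
  note r = rankingsD[OF profiles_ranking[OF P a]]
  have "card ?B = c"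
    using card_set_picks[OF profiles_ranking[OF P a], of "{..<M}" c] assms by simp
  moreover have "?B \<subseteq> set (P a)"
    using set_picks_subset[of "P a" "{..<M}" c] r assms(3) by auto
  ultimately have "(\<Sum>i<c. borda_score m (m - i)) \<le> rank_weight (borda_score m) (P a) ?B"
    using rank_weight_card_lower[of "P a" ?B "borda_score m", OF _ _ scoring_vector_borda] r
    by simp
  moreover have "(\<Sum>i<c. borda_score m (m - i)) = (\<Sum>i<c. real i + 1)"
    using assms by (intro sum.cong) (auto simp: borda_score_def)
  moreover have "real c * c / 2 \<le> (\<Sum>i<c. real i + 1)"
    by (induction c) (auto simp: algebra_simps)
  ultimately show "real c * c / 2 \<le> rank_weight (borda_score m) (P a) ?B"
    by linarith
qed

lemma SW_e_borda_equal_split_ge: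
  assumes n: "1 \<le> n" and tn: "n * t \<le> m"
  shows "real t * t / 2 \<le> SW_e n m (borda_score m) (equal_split n m t)"
proof (rule SW_e_ge[OF n])
  fix a assume a: "a < n"
  have "real t * t / 2 \<le> real (equal_split n m t a) * equal_split n m t a / 2"
    using equal_split_bounds(1)[OF tn a] by (simp add: mult_mono)
  also have "\<dots> \<le> EU n m (borda_score m) (equal_split n m t) a"
    unfolding EU_equal_split[OF tn a] using equal_split_bounds[OF tn a]
    by (intro pick_value_borda_ge[OF a]) auto
  finally show "real t * t / 2 \<le> EU n m (borda_score m) (equal_split n m t) a" .
qed

lemma real_quotient_le_twice_div:
  assumes "1 \<le> n" "2 * n \<le> m"
  shows "real m / (2 * n) \<le> real (m div n)"
proof -
  have "m = n * (m div n) + m mod n" by simp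
  moreover have "m mod n < n" using assms(1) by simp
  ultimately have "m \<le> n * (m div n) + n" by linarith
  then have "real m \<le> real n * real (m div n) + real n"
    by (metis of_nat_add of_nat_le_iff of_nat_mult)
  moreover have "2 * real n \<le> real m"
    using assms(2) by (metis of_nat_le_iff of_nat_mult of_nat_numeral)
  ultimately have "real m \<le> 2 * (real n * real (m div n))"
    by linarith
  then show ?thesis
    using assms(1) by (simp add: divide_simps algebra_simps)
qed

text \<open>The equal split gives every agent at least (m / n)^2 / 8, while the near-equal optimum keeps all
expected utilities within 4 m n of each other.\<close>
lemma borda_part:
  assumes n: "1 \<le> n" and e: "0 < \<epsilon>"
  shows "\<exists>M. \<forall>m\<ge>M. \<exists>k\<in>Kstar n m (borda_score m). EU_ratio n m (borda_score m) k < \<epsilon>"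
proof (intro exI allI impI)
  fix m assume mM: "max (2 * n) (nat \<lceil>64 * real n ^ 3 / \<epsilon>\<rceil> + 1) \<le> m"
  let ?s = "borda_score m"
  define t where "t = m div n"
  obtain k L where k: "k \<in> Kstar n m ?s" and L: "\<forall>k'\<in>kvecs n m. SW_e n m ?s k' \<le> L"
    and near: "\<forall>a<n. L \<le> EU n m ?s k a \<and> EU n m ?s k a \<le> L + 4 * ?s 1 * n"
    using exists_optimal_sequence_near_equal[OF n scoring_vector_borda] by blast
  have m2n: "2 * n \<le> m" and m_big: "64 * real n ^ 3 / \<epsilon> < real m"
    using mM by linarith+
  have tn: "n * t \<le> m" unfolding t_def by (simp add: mult.commute)
  have rt: "real m / (2 * n) \<le> real t"
    unfolding t_def using n m2n by (rule real_quotient_le_twice_div)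
  have pos: "0 < real n" "0 < real m" "0 < real t"
    using n m2n unfolding t_def by (simp_all add: div_greater_zero_iff)
  have "real t * t / 2 \<le> L"
    using SW_e_borda_equal_split_ge[OF n tn] L equal_split_in_kvecs[OF n tn] by fastforce
  moreover have "0 < real t * t / 2"
    using pos by simp
  ultimately have L_pos: "0 < L"
    by linarith
  have "EU_ratio n m ?s k \<le> (L + 4 * ?s 1 * n - L) / L"
    unfolding EU_ratio_def by (rule spread_ratio_le[OF n _ L_pos]) (use near in auto)
  also have "\<dots> = 4 * real m * n / L"
    using m2n n by (simp add: borda_score_def)
  also have "\<dots> \<le> 4 * real m * n / (real t * t / 2)"
    using \<open>real t * t / 2 \<le> L\<close> pos L_pos by (intro divide_left_mono) auto
  also have "\<dots> \<le> 4 * real m * n / ((real m / (2 * n)) * (real m / (2 * n)) / 2)"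
    using rt pos by (intro divide_left_mono mult_mono divide_right_mono) auto
  also have "\<dots> = 32 * real n ^ 3 / real m"
    using pos by (simp add: field_simps power3_eq_cube)
  also have "\<dots> < \<epsilon>"
  proof -
    have "64 * real n ^ 3 < \<epsilon> * real m"
      using m_big e by (simp add: divide_simps mult.commute)
    moreover have "0 \<le> real n ^ 3"
      by simp
    ultimately have "32 * real n ^ 3 < \<epsilon> * real m"
      by linarith
    then show ?thesis
      using pos by (simp add: divide_simps)
  qed
  finally show "\<exists>k\<in>Kstar n m ?s. EU_ratio n m ?s k < \<epsilon>"
    using k by blast
qed

section \<open>Lexicographic scores\<close>

lemma scoring_vector_lex: "scoring_vector (lex_score m)"
  unfolding scoring_vector_def lex_score_def by (auto intro!: antimonoI power_increasing)

lemma sum_lex_score_prefix: "t \<le> m \<Longrightarrow> (\<Sum>j<t. lex_score m (Suc j)) = 2 ^ m - 2 ^ (m - t)"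
proof (induction t)
  case 0
  then show ?case by (simp add: lex_score_def)
next
  case (Suc t)
  then have "(2::real) ^ (m - t) = 2 * 2 ^ (m - Suc t)"
    by (metis Suc_diff_Suc Suc_le_lessD power_Suc)
  with Suc show ?case by (simp add: lex_score_def)
qed

lemma EU_le_total_score:
  assumes "scoring_vector s"
  shows "EU n m s k a \<le> (\<Sum>j<m. s (Suc j))"
proof -
  have "EU n m s k a \<le> (\<Sum>P\<in>profiles n m. \<Sum>j<m. s (Suc j)) / card (profiles n m)"
    unfolding EU_def utility_def
    by (intro average_mono finite_profiles profiles_nonempty sum_mono)
      (use scoring_vector_nonneg[OF assms] in auto)
  also have "\<dots> = (\<Sum>j<m. s (Suc j))"
    using finite_profiles profiles_nonempty by simp
  finally show ?thesis .
qed

lemma EU_lex_le: "EU n m (lex_score m) k a \<le> 2 ^ m"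
proof -
  have "EU n m (lex_score m) k a \<le> (\<Sum>j<m. lex_score m (Suc j))"
    by (rule EU_le_total_score[OF scoring_vector_lex])
  then show ?thesis
    using sum_lex_score_prefix[of m m] by simp
qed

lemma card_profiles_nth_eq:
  assumes a: "a < n" and "j < m" "x < m" "y < m"
  shows "card {P \<in> profiles n m. P a ! j = x} = card {P \<in> profiles n m. P a ! j = y}"
proof -
  let ?\<Phi> = "\<lambda>P. P(a := map (transpose x y) (P a))"
  have bij: "bij_betw ?\<Phi> (profiles n m) (profiles n m)"
    using assms by (intro bij_betw_relabel_agent) auto
  have nth: "?\<Phi> P a ! j = transpose x y (P a ! j)" if "P \<in> profiles n m" for P
    using rankingsD[OF profiles_ranking[OF that a]] assms by simp
  have "card {P \<in> profiles n m. P a ! j = y} = (\<Sum>P\<in>profiles n m. if P a ! j = y then 1 else 0)"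
    using finite_profiles by (simp add: sum.If_cases Int_def)
  also have "\<dots> = (\<Sum>P\<in>profiles n m. if ?\<Phi> P a ! j = y then 1 else 0)"
    by (rule sum.reindex_bij_betw[OF bij, symmetric])
  also have "\<dots> = (\<Sum>P\<in>profiles n m. if P a ! j = x then 1 else 0)"
    using nth by (intro sum.cong) (auto simp: transpose_eq_iff)
  also have "\<dots> = card {P \<in> profiles n m. P a ! j = x}"
    using finite_profiles by (simp add: sum.If_cases Int_def)
  finally show ?thesis by simp
qed

lemma card_profiles_nth_in:
  assumes a: "a < n" and j: "j < m" and S: "S \<subseteq> {..<m}"
  shows "card {P \<in> profiles n m. P a ! j \<in> S} = card S * card {P \<in> profiles n m. P a ! j = 0}"
proof -
  have "{P \<in> profiles n m. P a ! j \<in> S} = (\<Union>y\<in>S. {P \<in> profiles n m. P a ! j = y})"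
    by auto
  moreover have "finite {P \<in> profiles n m. P a ! j = y}" for y
    using finite_profiles by simp
  then have "card (\<Union>y\<in>S. {P \<in> profiles n m. P a ! j = y}) = (\<Sum>y\<in>S. card {P \<in> profiles n m. P a ! j = y})"
    using finite_subset[OF S] by (intro card_UN_disjoint) auto
  ultimately have "card {P \<in> profiles n m. P a ! j \<in> S} = (\<Sum>y\<in>S. card {P \<in> profiles n m. P a ! j = y})"
    by simp
  also have "\<dots> = (\<Sum>y\<in>S. card {P \<in> profiles n m. P a ! j = 0})"
  proof (rule sum.cong[OF refl])
    fix y assume "y \<in> S"
    with S j show "card {P \<in> profiles n m. P a ! j = y} = card {P \<in> profiles n m. P a ! j = 0}"
      by (intro card_profiles_nth_eq[OF a j]) auto
  qed
  finally show ?thesis by simp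
qed

lemma card_profiles_nth_in_real:
  assumes a: "a < n" and j: "j < m" and S: "S \<subseteq> {..<m}"
  shows "real (card {P \<in> profiles n m. P a ! j \<in> S}) = card S * card (profiles n m) / m"
proof -
  have "P a ! j < m" if "P \<in> profiles n m" for P
    using rankingsD[OF profiles_ranking[OF that a]] j nth_mem[of j "P a"] by auto
  then have "{P \<in> profiles n m. P a ! j \<in> {..<m}} = profiles n m"
    by auto
  then have "card (profiles n m) = m * card {P \<in> profiles n m. P a ! j = 0}"
    using card_profiles_nth_in[OF a j, of "{..<m}"] by simp
  with card_profiles_nth_in[OF assms] j show ?thesis
    by simp
qed

lemma take_filter_eq_take:
  assumes "\<forall>x\<in>set (take t r). Q x" "t \<le> length r"
  shows "take t (filter Q r) = take t r"
proof -
  have "filter Q r = filter Q (take t r) @ filter Q (drop t r)"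
    by (metis append_take_drop_id filter_append)
  also have "filter Q (take t r) = take t r"
    using assms(1) by (simp add: filter_id_conv)
  finally show ?thesis using assms(2) by simp
qed

lemma rank_weight_picks_prefix:
  assumes "scoring_vector s" "set (take t r) \<subseteq> R" "t \<le> c" "t \<le> length r"
  shows "(\<Sum>j<t. s (Suc j)) \<le> rank_weight s r (set (picks r R c))"
proof -
  have "take t (filter (\<lambda>x. x \<in> R) r) = take t r"
    using assms(2,4) by (intro take_filter_eq_take) auto
  then have "set (take t r) \<subseteq> set (picks r R c)"
    unfolding picks_def using set_take_subset_set_take[OF assms(3), of "filter (\<lambda>x. x \<in> R) r"] by simp
  moreover have "(\<Sum>j<t. s (Suc j)) \<le> rank_weight s r (set (take t r))"
  proof -
    have "(\<Sum>j<t. s (Suc j)) = (\<Sum>j<t. if r ! j \<in> set (take t r) then s (Suc j) else 0)"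
    proof (intro sum.cong refl)
      fix j assume "j \<in> {..<t}"
      then have "take t r ! j \<in> set (take t r)"
        using assms(4) by (intro nth_mem) simp
      moreover have "take t r ! j = r ! j"
        using \<open>j \<in> {..<t}\<close> by simp
      ultimately show "s (Suc j) = (if r ! j \<in> set (take t r) then s (Suc j) else 0)"
        by simp
    qed
    also have "\<dots> \<le> rank_weight s r (set (take t r))"
      unfolding rank_weight_def using assms(4) scoring_vector_nonneg[OF assms(1)]
      by (intro sum_mono2) auto
    finally show ?thesis .
  qed
  ultimately show ?thesis
    using rank_weight_mono[OF assms(1)] by (meson order_trans)
qed

lemma sum_ge_card_event:
  fixes f :: "'a \<Rightarrow> real"
  assumes "finite A" "\<And>x. x \<in> A \<Longrightarrow> 0 \<le> f x" "\<And>x. x \<in> A \<Longrightarrow> Q x \<Longrightarrow> G \<le> f x"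
  shows "G * card {x \<in> A. Q x} \<le> sum f A"
proof -
  have "G * card {x \<in> A. Q x} = (\<Sum>x\<in>{x \<in> A. Q x}. G)"
    by simp
  also have "\<dots> \<le> (\<Sum>x\<in>{x \<in> A. Q x}. f x)"
    using assms(3) by (intro sum_mono) auto
  also have "\<dots> \<le> sum f A"
    using assms(1,2) by (intro sum_mono2) auto
  finally show ?thesis .
qed

text \<open>If her t favourite items are all still available, the agent gets at least the top t lexicographic
scores; by the union bound this fails with probability at most t (m - M) / m.\<close>
lemma card_profiles_top_unavailable_le:
  assumes a: "a < n" and "t \<le> m"
  shows "real (card {P \<in> profiles n m. \<not> set (take t (P a)) \<subseteq> {..<M}})
    \<le> real t * (real (m - M) * card (profiles n m) / m)"
proof -
  let ?A = "profiles n m"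
  let ?U = "{P \<in> ?A. \<not> set (take t (P a)) \<subseteq> {..<M}}"
  let ?bad = "\<lambda>j. {P \<in> ?A. P a ! j \<in> {M..<m}}"
  have "?U \<subseteq> (\<Union>j<t. ?bad j)"
  proof
    fix P assume P: "P \<in> ?U"
    then obtain j where j: "j < length (take t (P a))" "M \<le> take t (P a) ! j"
      by (auto simp: in_set_conv_nth not_less subset_eq)
    moreover have "P \<in> ?A" using P by simp
    then have "P a ! j < m"
      using rankingsD[OF profiles_ranking[OF _ a]] j(1) nth_mem[of j "P a"] by auto
    ultimately show "P \<in> (\<Union>j<t. ?bad j)"
      using P by auto
  qed
  then have "card ?U \<le> card (\<Union>j<t. ?bad j)"
    by (rule card_mono[rotated]) (simp add: finite_profiles)
  also have "\<dots> \<le> (\<Sum>j<t. card (?bad j))"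
    by (rule card_UN_le) simp
  finally have "card ?U \<le> (\<Sum>j<t. card (?bad j))" .
  then have "real (card ?U) \<le> (\<Sum>j<t. real (card (?bad j)))"
    by (simp only: of_nat_sum[symmetric] of_nat_le_iff)
  also have "\<dots> = (\<Sum>j<t. real (m - M) * card ?A / m)"
  proof (rule sum.cong[OF refl])
    fix j assume "j \<in> {..<t}"
    then have "j < m" using assms(2) by simp
    moreover have "{M..<m} \<subseteq> {..<m}" by auto
    ultimately show "real (card (?bad j)) = real (m - M) * card ?A / m"
      using card_profiles_nth_in_real[OF a] by (simp only: card_atLeastLessThan) simp
  qed
  finally show ?thesis
    by simp
qed

lemma pick_value_lex_ge:
  assumes a: "a < n" and "t \<le> c" "t \<le> m" "M \<le> m"
  shows "(2 ^ m - 2 ^ (m - t)) * (1 - real t * (m - M) / m) \<le> pick_value n m (lex_score m) a c M"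
proof -
  let ?s = "lex_score m"
  let ?A = "profiles n m"
  define G :: real where "G = 2 ^ m - 2 ^ (m - t)"
  define good where "good P \<longleftrightarrow> set (take t (P a)) \<subseteq> {..<M}" for P
  define w where "w P = rank_weight ?s (P a) (set (picks (P a) {..<M} c))" for P
  have N: "0 < real (card ?A)"
    using finite_profiles profiles_nonempty by (simp add: card_gt_0_iff)
  have G: "0 \<le> G"
    unfolding G_def by (simp add: power_increasing)
  have good_ge: "G \<le> w P" if "P \<in> ?A" "good P" for P
    using rank_weight_picks_prefix[OF scoring_vector_lex[of m], of t "P a" "{..<M}" c]
      sum_lex_score_prefix[OF assms(3)] rankingsD[OF profiles_ranking[OF that(1) a]] that(2) assms(2,3)
    unfolding G_def w_def good_def by simp
  have bad: "real (card {P \<in> ?A. \<not> good P}) \<le> real t * (real (m - M) * card ?A / m)"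
    unfolding good_def by (rule card_profiles_top_unavailable_le[OF a assms(3)])
  have "card {P \<in> ?A. good P} + card {P \<in> ?A. \<not> good P}
      = card ({P \<in> ?A. good P} \<union> {P \<in> ?A. \<not> good P})"
    by (rule card_Un_disjoint[symmetric]) (auto simp: finite_profiles)
  also have "{P \<in> ?A. good P} \<union> {P \<in> ?A. \<not> good P} = ?A"
    by blast
  finally have "real (card ?A) = card {P \<in> ?A. good P} + card {P \<in> ?A. \<not> good P}"
    by (metis of_nat_add)
  moreover have "real (card ?A) * (1 - real t * (m - M) / m) = real (card ?A) - real t * (real (m - M) * card ?A / m)"
    by (simp add: algebra_simps)
  ultimately have "real (card ?A) * (1 - real t * (m - M) / m) \<le> card {P \<in> ?A. good P}"
    using bad by linarith
  then have "G * (real (card ?A) * (1 - real t * (m - M) / m)) \<le> G * card {P \<in> ?A. good P}"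
    by (rule mult_left_mono[OF _ G])
  also have "\<dots> \<le> sum w ?A"
    by (rule sum_ge_card_event[OF finite_profiles _ good_ge])
      (simp add: w_def rank_weight_nonneg[OF scoring_vector_lex])
  finally have "G * (1 - real t * (m - M) / m) * card ?A \<le> sum w ?A"
    by (simp only: ac_simps)
  then have "G * (1 - real t * (m - M) / m) \<le> sum w ?A / card ?A"
    using pos_le_divide_eq[OF N] by blast
  then show ?thesis
    unfolding pick_value_def G_def w_def .
qed

lemma SW_e_lex_equal_split_ge:
  assumes n: "1 \<le> n" and tm: "n * t \<le> m"
    and \<delta>: "0 \<le> \<delta>" "\<delta> \<le> 1" "1 \<le> \<delta> * 2 ^ t" "real n * t * t \<le> \<delta> * m"
  shows "2 ^ m * (1 - \<delta>) * (1 - \<delta>) \<le> SW_e n m (lex_score m) (equal_split n m t)"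
proof (rule SW_e_ge[OF n])
  fix a assume a: "a < n"
  have "t \<le> m" using tm n by (metis le_trans mult_le_mono1 mult_1)
  have "(2::real) ^ (m - t) * 1 \<le> 2 ^ (m - t) * (\<delta> * 2 ^ t)"
    using \<delta>(3) by (intro mult_left_mono) auto
  also have "\<dots> = \<delta> * 2 ^ m"
    using \<open>t \<le> m\<close> by (simp add: power_add[symmetric] algebra_simps)
  finally have top: "2 ^ m * (1 - \<delta>) \<le> 2 ^ m - 2 ^ (m - t)"
    by (simp add: algebra_simps)
  have "real t * (a * t) \<le> real n * t * t"
    using a by (simp add: mult_right_mono mult.commute mult.left_commute)
  then have "real t * (a * t) / m \<le> \<delta>"
    using \<delta>(1,4) by (cases "m = 0") (auto simp: divide_le_eq)
  moreover have "m - (m - a * t) = a * t"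
    using equal_split_bounds(3)[OF tm a] by simp
  ultimately have available: "1 - \<delta> \<le> 1 - real t * (m - (m - a * t)) / m"
    by simp
  have "2 ^ m * (1 - \<delta>) * (1 - \<delta>) \<le> (2 ^ m - 2 ^ (m - t)) * (1 - real t * (m - (m - a * t)) / m)"
  proof (rule mult_mono[OF top available])
    show "0 \<le> 1 - \<delta>" using \<delta>(2) by simp
    show "0 \<le> (2::real) ^ m - 2 ^ (m - t)" by (simp add: power_increasing)
  qed
  also have "\<dots> \<le> pick_value n m (lex_score m) a (equal_split n m t a) (m - a * t)"
    using equal_split_bounds[OF tm a] \<open>t \<le> m\<close> by (intro pick_value_lex_ge[OF a]) auto
  also have "\<dots> = EU n m (lex_score m) (equal_split n m t) a"
    using EU_equal_split[OF tm a] by simp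
  finally show "2 ^ m * (1 - \<delta>) * (1 - \<delta>) \<le> EU n m (lex_score m) (equal_split n m t) a" .
qed

lemma relative_gap_le:
  fixes X \<delta> :: real
  assumes "0 < X" "0 \<le> \<delta>" "\<delta> \<le> 1 / 4"
  shows "(X - X * (1 - \<delta>) * (1 - \<delta>)) / (X * (1 - \<delta>) * (1 - \<delta>)) \<le> 4 * \<delta>"
proof -
  have "X - X * (1 - \<delta>) * (1 - \<delta>) = X * (1 - (1 - \<delta>) * (1 - \<delta>))"
    "X * (1 - \<delta>) * (1 - \<delta>) = X * ((1 - \<delta>) * (1 - \<delta>))"
    by (simp_all add: algebra_simps)
  then have "(X - X * (1 - \<delta>) * (1 - \<delta>)) / (X * (1 - \<delta>) * (1 - \<delta>)) = (1 - (1 - \<delta>) * (1 - \<delta>)) / ((1 - \<delta>) * (1 - \<delta>))"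
    using assms(1) by (simp only: mult_divide_mult_cancel_left_if) simp
  also have "\<dots> \<le> (2 * \<delta>) / (1 / 2)"
  proof (rule frac_le)
    show "1 - (1 - \<delta>) * (1 - \<delta>) \<le> 2 * \<delta>"
      using assms(2) by (simp add: algebra_simps)
    have "1 / 2 \<le> 1 - 2 * \<delta>" using assms(3) by simp
    also have "\<dots> \<le> (1 - \<delta>) * (1 - \<delta>)" by (simp add: algebra_simps)
    finally show "1 / 2 \<le> (1 - \<delta>) * (1 - \<delta>)" .
  qed (use assms in auto)
  finally show ?thesis by simp
qed

text \<open>With t of order 1 / \<delta>, for large m the equal split already secures every agent all but a
2 \<delta> fraction of the total score 2 ^ m - 1, and so every optimal sequence does.\<close>
lemma lex_part:
  assumes n: "1 \<le> n" and e: "0 < \<epsilon>"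
  shows "\<exists>M. \<forall>m\<ge>M. \<forall>k\<in>Kstar n m (lex_score m). EU_ratio n m (lex_score m) k < \<epsilon>"
proof -
  define \<delta> :: real where "\<delta> = min (1 / 4) (\<epsilon> / 8)"
  have \<delta>: "0 < \<delta>" "\<delta> \<le> 1 / 4" "\<delta> \<le> \<epsilon> / 8"
    using e unfolding \<delta>_def by auto
  define t where "t = nat \<lceil>1 / \<delta>\<rceil>"
  have "1 / \<delta> \<le> real t"
    unfolding t_def by linarith
  also have "real t \<le> 2 ^ t"
  proof -
    have "t < 2 ^ t" by (rule less_exp)
    then have "real t < real (2 ^ t)" by (simp only: of_nat_less_iff)
    then show ?thesis by simp
  qed
  finally have t: "1 \<le> \<delta> * 2 ^ t"
    using \<delta>(1) by (simp add: divide_le_eq mult.commute)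
  show ?thesis
  proof (intro exI allI impI ballI)
    fix m k
    assume m: "n * t + nat \<lceil>real n * t * t / \<delta>\<rceil> + 1 \<le> m" and k: "k \<in> Kstar n m (lex_score m)"
    let ?s = "lex_score m"
    define L where "L = 2 ^ m * (1 - \<delta>) * (1 - \<delta>)"
    have tm: "n * t \<le> m" using m by simp
    have "real n * t * t / \<delta> \<le> m" using m by linarith
    then have "real n * t * t \<le> \<delta> * m" using \<delta>(1) by (simp add: divide_le_eq mult.commute)
    then have "L \<le> SW_e n m ?s (equal_split n m t)"
      unfolding L_def using SW_e_lex_equal_split_ge[OF n tm _ _ t] \<delta>(1,2) by simp
    also have "\<dots> \<le> SW_e n m ?s k"
      using k equal_split_in_kvecs[OF n tm] unfolding Kstar_def by blast
    finally have SW_k: "L \<le> SW_e n m ?s k" .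
    have bounds: "\<forall>a<n. L \<le> EU n m ?s k a \<and> EU n m ?s k a \<le> 2 ^ m"
    proof (intro allI impI conjI)
      fix a assume "a < n"
      then have "SW_e n m ?s k \<le> EU n m ?s k a" unfolding SW_e_def by (intro Min_le) auto
      with SW_k show "L \<le> EU n m ?s k a" by simp
      show "EU n m ?s k a \<le> 2 ^ m"
        by (rule EU_lex_le)
    qed
    have "0 < L" unfolding L_def using \<delta>(2) by simp
    then have "EU_ratio n m ?s k \<le> (2 ^ m - L) / L"
      unfolding EU_ratio_def by (rule spread_ratio_le[OF n bounds])
    also have "\<dots> \<le> 4 * \<delta>"
      unfolding L_def using \<delta> by (intro relative_gap_le) auto
    also have "\<dots> < \<epsilon>"
      using \<delta>(3) e by simp
    finally show "EU_ratio n m ?s k < \<epsilon>" .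
  qed
qed

theorem proposition2:
  fixes n :: nat
  assumes "n \<ge> 1"
  shows "(\<forall>\<epsilon>>0. \<exists>M. \<forall>m\<ge>M. \<forall>k\<in>Kstar n m (lex_score m). EU_ratio n m (lex_score m) k < \<epsilon>)
       \<and> (\<forall>\<epsilon>>0. \<exists>M. \<forall>m\<ge>M. \<exists>k\<in>Kstar n m (borda_score m). EU_ratio n m (borda_score m) k < \<epsilon>)"
  using lex_part[OF assms] borda_part[OF assms] by blast

end
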